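(* Let $N=\{1,\dots,n\}$, $n\ge2$, be a parallel-link network with unit demand and affine latencies $\ell_i(x_i)=a_ix_i+b_i$, $a_i>0$, $b_i\ge0$, and suppose $x_i(0)>0$ for all $i\in N$. Let $c\in\mathbb{R}_+$. For $t\in\mathbb{R}^N_+$ and a flow $x$, we have that $t\in\mathcal{T}(c)$ and $x=x(t)$ if and only if there exists $K\in\mathbb{R}$ such that (1) $a_ix_i+b_i+t_i=K$ for all $i\in N$; (2) $\sum_{i\in N}x_i=1$; (3) $t_i=\min\left\{\left(a_i+\frac{1}{\sum_{j\neq i}1/a_j}\right)x_i,\;c\right\}$ for all $i\in N$; (4) $x_i>0$ for all $i\in N$.
   Context: Parallel links $N$ from source to destination, one unit of flow; a flow is $x\in\mathbb{R}^N_+$ with $\sum_ix_i=1$. For tolls $t\in\mathbb{R}^N_+$, $x(t)$ denotes the unique Wardrop equilibrium for $t$: for all $i,j$ with $x_i>0$, $\ell_i(x_i)+t_i\le \ell_j(x_j)+t_j$; $x(0)$ is the untolled one. Profit $\Pi_i(t)=t_ix_i(t)$. $\mathcal{T}(c)$ is the set of $c$-capped subgame perfect Nash equilibria: toll vectors $t$ with $0\le t_i\le c$ for all $i$ such that for every $i$ and every $t'_i\in[0,c]$, $\Pi_i(t_i,t_{-i})\ge\Pi_i(t'_i,t_{-i})$ (flow recomputed as the Wardrop equilibrium). *)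

theory Defs
  imports Complex_Main
begin

text \<open>Flows and tolls are functions nat => real; only their values on {1..n} matter
  (flows are normalised to 0 outside N so that the equilibrium is unique as a function).\<close>

definition is_flow :: "nat \<Rightarrow> (nat \<Rightarrow> real) \<Rightarrow> bool" where
  "is_flow n x \<longleftrightarrow> (\<forall>i\<in>{1..n}. 0 \<le> x i) \<and> (\<Sum>i\<in>{1..n}. x i) = 1"

definition wardrop ::
  "nat \<Rightarrow> (nat \<Rightarrow> real) \<Rightarrow> (nat \<Rightarrow> real) \<Rightarrow> (nat \<Rightarrow> real) \<Rightarrow> (nat \<Rightarrow> real) \<Rightarrow> bool" where
  "wardrop n a b t x \<longleftrightarrow> is_flow n x \<and> (\<forall>i. i \<notin> {1..n} \<longrightarrow> x i = 0) \<and>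
     (\<forall>i\<in>{1..n}. \<forall>j\<in>{1..n}. x i > 0 \<longrightarrow>
        a i * x i + b i + t i \<le> a j * x j + b j + t j)"

definition eqflow ::
  "nat \<Rightarrow> (nat \<Rightarrow> real) \<Rightarrow> (nat \<Rightarrow> real) \<Rightarrow> (nat \<Rightarrow> real) \<Rightarrow> (nat \<Rightarrow> real)" where
  "eqflow n a b t = (THE x. wardrop n a b t x)"

definition profit ::
  "nat \<Rightarrow> (nat \<Rightarrow> real) \<Rightarrow> (nat \<Rightarrow> real) \<Rightarrow> (nat \<Rightarrow> real) \<Rightarrow> nat \<Rightarrow> real" where
  "profit n a b t i = t i * eqflow n a b t i"

definition capped_SPNE ::
  "nat \<Rightarrow> (nat \<Rightarrow> real) \<Rightarrow> (nat \<Rightarrow> real) \<Rightarrow> real \<Rightarrow> (nat \<Rightarrow> real) set" where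
  "capped_SPNE n a b c = {t. (\<forall>i\<in>{1..n}. 0 \<le> t i \<and> t i \<le> c) \<and>
      (\<forall>i\<in>{1..n}. \<forall>t'\<in>{0..c}. profit n a b t i \<ge> profit n a b (t(i := t')) i)}"

end

theory Submission
  imports Defs
begin

text \<open>Wardrop equilibria of a parallel network with affine latencies are water-fillings at a
  common cost level, hence unique. If all links are used and link \<open>i\<close> raises its toll by \<open>d\<close>,
  the other links absorb at most their linear share of the displaced flow, so \<open>x\<^sub>i\<close> drops by at least
  \<open>d / \<alpha>\<^sub>i\<close>, where \<open>\<alpha>\<^sub>i = demand_slope n a i\<close>, with equality for small \<open>d\<close>. Thus the profit of
  link \<open>i\<close> is bounded by the concave quadratic \<open>(t\<^sub>i + d) (x\<^sub>i - d / \<alpha>\<^sub>i)\<close>, attained near \<open>d = 0\<close>;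
  its maximiser over \<open>[0, c]\<close> gives the toll \<open>min (\<alpha>\<^sub>i x\<^sub>i) c\<close> in both directions. At an
  equilibrium every link is used: tolls only raise the cost level above the untolled one, which
  exceeds every \<open>b\<^sub>i\<close>, so an unused link could earn a positive profit with a small toll.\<close>

definition water_level ::
  "nat \<Rightarrow> (nat \<Rightarrow> real) \<Rightarrow> (nat \<Rightarrow> real) \<Rightarrow> (nat \<Rightarrow> real) \<Rightarrow> real \<Rightarrow> (nat \<Rightarrow> real) \<Rightarrow> bool"
  where "water_level n a b t K x \<longleftrightarrow> (\<forall>i\<in>{1..n}. x i = max 0 ((K - b i - t i) / a i))"

lemma water_level_nonneg:
  "water_level n a b t K x \<Longrightarrow> i \<in> {1..n} \<Longrightarrow> 0 \<le> x i"
  by (simp add: water_level_def)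

lemma water_level_lower:
  "water_level n a b t K x \<Longrightarrow> i \<in> {1..n} \<Longrightarrow> (K - b i - t i) / a i \<le> x i"
  by (simp add: water_level_def)

lemma water_level_cost:
  assumes "water_level n a b t K x" "i \<in> {1..n}" "0 < a i" "0 < x i"
  shows "a i * x i + b i + t i = K"
proof -
  have "x i = (K - b i - t i) / a i"
    using assms by (auto simp: water_level_def max_def split: if_splits)
  with \<open>0 < a i\<close> show ?thesis by (simp add: field_simps)
qed

lemma water_level_unused:
  assumes "water_level n a b t K x" "i \<in> {1..n}" "0 < a i" "\<not> 0 < x i"
  shows "K \<le> b i + t i"
proof -
  have "(K - b i - t i) / a i \<le> 0"
    using assms water_level_lower[OF assms(1,2)] by linarith
  with \<open>0 < a i\<close> show ?thesis by (simp add: divide_le_0_iff)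
qed

lemma water_level_of_costs:
  assumes "\<forall>i\<in>{1..n}. 0 < a i" "\<forall>i\<in>{1..n}. a i * x i + b i + t i = K" "\<forall>i\<in>{1..n}. 0 \<le> x i"
  shows "water_level n a b t K x"
  unfolding water_level_def
proof
  fix i assume i: "i \<in> {1..n}"
  have "x i = (K - b i - t i) / a i"
    using bspec[OF assms(1) i] bspec[OF assms(2) i] by (auto simp: field_simps)
  with bspec[OF assms(3) i] show "x i = max 0 ((K - b i - t i) / a i)" by simp
qed

lemma wardrop_imp_water_level:
  assumes a: "\<forall>i\<in>{1..n}. 0 < a i" and w: "wardrop n a b t x"
  shows "\<exists>K. water_level n a b t K x"
proof -
  have nonneg: "\<forall>i\<in>{1..n}. 0 \<le> x i" and sum: "(\<Sum>i\<in>{1..n}. x i) = 1"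
    and cond: "\<forall>i\<in>{1..n}. \<forall>j\<in>{1..n}. 0 < x i \<longrightarrow> a i * x i + b i + t i \<le> a j * x j + b j + t j"
    using w by (auto simp: wardrop_def is_flow_def)
  obtain i0 where i0: "i0 \<in> {1..n}" "0 < x i0"
    using sum sum_nonpos[of "{1..n}" x] by (metis not_le zero_less_one)
  define K where "K = a i0 * x i0 + b i0 + t i0"
  have "x i = max 0 ((K - b i - t i) / a i)" if i: "i \<in> {1..n}" for i
  proof (cases "0 < x i")
    case True
    then have "a i * x i + b i + t i = K"
      using cond i i0 unfolding K_def by (meson order_antisym)
    with True bspec[OF a i] show ?thesis by (auto simp: field_simps)
  next
    case False
    then have "x i = 0" using nonneg i by force
    moreover have "K \<le> b i + t i" using cond i i0 \<open>x i = 0\<close> unfolding K_def by force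
    ultimately show ?thesis using bspec[OF a i] by (simp add: divide_nonpos_pos)
  qed
  then show ?thesis unfolding water_level_def by blast
qed

lemma water_level_imp_wardrop:
  assumes a: "\<forall>i\<in>{1..n}. 0 < a i" and w: "water_level n a b t K x"
    and sum: "(\<Sum>i\<in>{1..n}. x i) = 1" and outside: "\<forall>i. i \<notin> {1..n} \<longrightarrow> x i = 0"
  shows "wardrop n a b t x"
proof -
  have "a i * x i + b i + t i \<le> a j * x j + b j + t j"
    if i: "i \<in> {1..n}" and j: "j \<in> {1..n}" and pos: "0 < x i" for i j
  proof -
    have "a i * x i + b i + t i = K" using water_level_cost[OF w i _ pos] a i by blast
    moreover have "K - b j - t j \<le> a j * x j"
      using water_level_lower[OF w j] a j by (simp add: divide_le_eq mult.commute)
    ultimately show ?thesis by linarith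
  qed
  then show ?thesis
    using water_level_nonneg[OF w] sum outside by (auto simp: wardrop_def is_flow_def)
qed

lemma water_level_comparison:
  assumes a: "\<forall>i\<in>{1..n}. 0 < a i"
    and x: "water_level n a b t K x" "(\<Sum>i\<in>{1..n}. x i) = 1"
    and y: "water_level n a b s L y" "(\<Sum>i\<in>{1..n}. y i) = 1"
  shows "\<exists>j\<in>{1..n}. 0 < y j \<and> K - t j \<le> L - s j"
proof (rule ccontr)
  assume "\<not> ?thesis"
  then have drop: "L - s j < K - t j" if "j \<in> {1..n}" "0 < y j" for j
    using that by force
  have less: "y j < x j" if j: "j \<in> {1..n}" and pos: "0 < y j" for j
  proof -
    have "y j = (L - b j - s j) / a j"
      using y(1) j pos by (auto simp: water_level_def max_def split: if_splits)
    also have "\<dots> < (K - b j - t j) / a j"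
      using drop[OF j pos] a j by (intro divide_strict_right_mono) auto
    also have "\<dots> \<le> x j" by (rule water_level_lower[OF x(1) j])
    finally show ?thesis .
  qed
  have "y j \<le> x j" if j: "j \<in> {1..n}" for j
    using less[OF j] water_level_nonneg[OF x(1) j] water_level_nonneg[OF y(1) j]
    by (cases "0 < y j") auto
  moreover obtain j where j: "j \<in> {1..n}" "0 < y j"
    using y(2) sum_nonpos[of "{1..n}" y] by (metis not_le zero_less_one)
  then have "\<exists>j\<in>{1..n}. y j < x j" using less by blast
  ultimately have "(\<Sum>i\<in>{1..n}. y i) < (\<Sum>i\<in>{1..n}. x i)"
    by (intro sum_strict_mono_ex1) auto
  with x(2) y(2) show False by simp
qed

lemma wardrop_unique:
  assumes a: "\<forall>i\<in>{1..n}. 0 < a i" and x: "wardrop n a b t x" and y: "wardrop n a b t y"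
  shows "x = y"
proof
  obtain K L where K: "water_level n a b t K x" and L: "water_level n a b t L y"
    using wardrop_imp_water_level[OF a] x y by blast
  have sums: "(\<Sum>i\<in>{1..n}. x i) = 1" "(\<Sum>i\<in>{1..n}. y i) = 1"
    using x y by (auto simp: wardrop_def is_flow_def)
  have "K \<le> L" "L \<le> K"
    using water_level_comparison[OF a K sums(1) L sums(2)]
      water_level_comparison[OF a L sums(2) K sums(1)] by auto
  fix i show "x i = y i"
    using K L x y \<open>K \<le> L\<close> \<open>L \<le> K\<close> by (cases "i \<in> {1..n}") (auto simp: water_level_def wardrop_def)
qed

lemma wardrop_exists:
  assumes a: "\<forall>i\<in>{1..n}. 0 < a i" and n: "1 \<le> n"
  shows "\<exists>x. wardrop n a b t x"
proof -
  define flow where "flow K j = max 0 ((K - b j - t j) / a j)" for K j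
  define L where "L = Min ((\<lambda>j. b j + t j) ` {1..n})"
  define U where "U = b 1 + t 1 + a 1"
  have one: "1 \<in> {1..n}" using n by simp
  have "L \<le> b 1 + t 1" unfolding L_def using one by (intro Min_le) auto
  then have "L \<le> U" unfolding U_def using a one by force
  have "(\<Sum>j\<in>{1..n}. flow L j) = 0"
  proof (intro sum.neutral ballI)
    fix j assume j: "j \<in> {1..n}"
    have "L \<le> b j + t j" unfolding L_def using j by (intro Min_le) auto
    then show "flow L j = 0" using a j by (simp add: flow_def divide_nonpos_pos)
  qed
  moreover have "1 \<le> (\<Sum>j\<in>{1..n}. flow U j)"
  proof -
    have "flow U 1 = 1" using bspec[OF a one] by (simp add: flow_def U_def)
    moreover have "0 \<le> (\<Sum>j\<in>{1..n} - {1}. flow U j)" by (intro sum_nonneg) (simp add: flow_def)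
    ultimately show ?thesis using sum.remove[OF _ one, of "flow U"] by simp
  qed
  moreover have "continuous_on {L..U} (\<lambda>K. \<Sum>j\<in>{1..n}. flow K j)"
    using a unfolding flow_def by (intro continuous_intros) force+
  ultimately obtain K where K: "(\<Sum>j\<in>{1..n}. flow K j) = 1"
    using IVT'[of "\<lambda>K. \<Sum>j\<in>{1..n}. flow K j" L 1 U] \<open>L \<le> U\<close> by auto
  define x where "x j = (if j \<in> {1..n} then flow K j else 0)" for j
  have "wardrop n a b t x"
    by (rule water_level_imp_wardrop[OF a, of _ _ K]) (use K in \<open>auto simp: x_def flow_def water_level_def\<close>)
  then show ?thesis by blast
qed

lemma eqflow_eq:
  assumes "\<forall>i\<in>{1..n}. 0 < a i" "wardrop n a b t x"
  shows "eqflow n a b t = x"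
  unfolding eqflow_def using wardrop_unique[OF assms(1)] assms(2) by (intro the_equality) auto

lemma wardrop_eqflow:
  assumes "\<forall>i\<in>{1..n}. 0 < a i" "1 \<le> n"
  shows "wardrop n a b t (eqflow n a b t)"
  using wardrop_exists[OF assms] eqflow_eq[OF assms(1)] by metis

lemma eqflow_water_level:
  assumes a: "\<forall>i\<in>{1..n}. 0 < a i" and n: "1 \<le> n"
  obtains K where "water_level n a b t K (eqflow n a b t)" "(\<Sum>i\<in>{1..n}. eqflow n a b t i) = 1"
proof -
  have w: "wardrop n a b t (eqflow n a b t)" by (rule wardrop_eqflow[OF a n])
  then obtain K where "water_level n a b t K (eqflow n a b t)"
    using wardrop_imp_water_level[OF a] by blast
  moreover have "(\<Sum>i\<in>{1..n}. eqflow n a b t i) = 1"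
    using w by (simp add: wardrop_def is_flow_def)
  ultimately show ?thesis by (rule that)
qed

lemma eqflow_of_costs:
  assumes a: "\<forall>i\<in>{1..n}. 0 < a i" and cost: "\<forall>i\<in>{1..n}. a i * x i + b i + t i = K"
    and sum: "(\<Sum>i\<in>{1..n}. x i) = 1" and pos: "\<forall>i\<in>{1..n}. 0 < x i" and i: "i \<in> {1..n}"
  shows "eqflow n a b t i = x i"
proof -
  define x' where "x' j = (if j \<in> {1..n} then x j else 0)" for j
  have "water_level n a b t K x"
    using pos by (intro water_level_of_costs[OF a cost]) (simp add: less_imp_le)
  then have "water_level n a b t K x'" by (simp add: water_level_def x'_def)
  then have "wardrop n a b t x'"
    by (rule water_level_imp_wardrop[OF a]) (use sum in \<open>auto simp: x'_def\<close>)
  with i show ?thesis by (simp add: eqflow_eq[OF a] x'_def)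
qed

text \<open>While all links are used, \<open>x\<^sub>i(t)\<close> decreases in \<open>t\<^sub>i\<close> with slope \<open>1 / demand_slope n a i\<close>.\<close>
definition demand_slope :: "nat \<Rightarrow> (nat \<Rightarrow> real) \<Rightarrow> nat \<Rightarrow> real"
  where "demand_slope n a i = a i + 1 / (\<Sum>j\<in>{1..n} - {i}. 1 / a j)"

lemma sum_inverse_others_pos:
  fixes a :: "nat \<Rightarrow> real"
  assumes a: "\<forall>i\<in>{1..n}. 0 < a i" and n: "2 \<le> n" and i: "i \<in> {1..n}"
  shows "0 < (\<Sum>j\<in>{1..n} - {i}. 1 / a j)"
proof -
  obtain j where j: "j \<in> {1..n} - {i}"
    using n by (cases "i = 1") (auto intro: that[of 1] that[of 2])
  show ?thesis
    using a j by (intro sum_pos2[of _ j]) (auto intro: less_imp_le)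
qed

lemma demand_slope_pos:
  assumes "\<forall>i\<in>{1..n}. 0 < a i" "2 \<le> n" "i \<in> {1..n}"
  shows "0 < demand_slope n a i"
  using sum_inverse_others_pos[OF assms] bspec[OF assms(1,3)]
  unfolding demand_slope_def by (simp add: add_pos_pos)

lemma divide_demand_slope:
  assumes a: "\<forall>i\<in>{1..n}. 0 < a i" and n: "2 \<le> n" and i: "i \<in> {1..n}"
  shows "d / demand_slope n a i = (d - d / (a i * (\<Sum>j\<in>{1..n}. 1 / a j))) / a i"
proof -
  define S where "S = (\<Sum>j\<in>{1..n} - {i}. 1 / a j)"
  have S: "0 < S" unfolding S_def by (rule sum_inverse_others_pos[OF a n i])
  have ai: "0 < a i" using a i by blast
  have "(\<Sum>j\<in>{1..n}. 1 / a j) = 1 / a i + S"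
    unfolding S_def using sum.remove[of "{1..n}" i "\<lambda>j. 1 / a j"] i by simp
  then have total: "a i * (\<Sum>j\<in>{1..n}. 1 / a j) = 1 + a i * S"
    using ai by (simp add: field_simps)
  have slope: "demand_slope n a i = (a i * S + 1) / S"
    using S unfolding demand_slope_def S_def[symmetric] by (simp add: field_simps)
  have "0 < 1 + a i * S" using ai S by (simp add: add_pos_pos)
  then have "d - d / (1 + a i * S) = d * S * a i / (1 + a i * S)"
    by (simp add: field_simps)
  then have "(d - d / (1 + a i * S)) / a i = d * S / (1 + a i * S)"
    using ai by simp
  moreover have "d / demand_slope n a i = d * S / (1 + a i * S)"
    unfolding slope by (simp add: add.commute)
  ultimately show ?thesis unfolding total by simp
qed

definition toll_shift_flow ::
  "(nat \<Rightarrow> real) \<Rightarrow> (nat \<Rightarrow> real) \<Rightarrow> nat \<Rightarrow> real \<Rightarrow> real \<Rightarrow> nat \<Rightarrow> real"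
  where "toll_shift_flow a x i d D j = x j + D / a j - (if j = i then d / a i else 0)"

lemma toll_shift_flow_cost:
  assumes "a j \<noteq> 0" "a j * x j + b j + t j = K"
  shows "a j * toll_shift_flow a x i d D j + b j + (t(i := t i + d)) j = K + D"
  using assms by (cases "j = i") (simp_all add: toll_shift_flow_def algebra_simps)

lemma sum_toll_shift_flow:
  assumes "i \<in> {1..n}"
  shows "(\<Sum>j\<in>{1..n}. toll_shift_flow a x i d D j)
    = (\<Sum>j\<in>{1..n}. x j) + D * (\<Sum>j\<in>{1..n}. 1 / a j) - d / a i"
  using assms
  by (simp add: toll_shift_flow_def sum.distrib sum_subtractf sum_distrib_left)

lemma wardrop_deviation_le:
  assumes a: "\<forall>j\<in>{1..n}. 0 < a j" and n: "2 \<le> n" and i: "i \<in> {1..n}"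
    and cost: "\<forall>j\<in>{1..n}. a j * x j + b j + t j = K" and sum: "(\<Sum>j\<in>{1..n}. x j) = 1"
    and y: "wardrop n a b (t(i := t i + d)) y" and pos: "0 < y i"
  shows "y i \<le> x i - d / demand_slope n a i"
proof -
  obtain L where L: "water_level n a b (t(i := t i + d)) L y"
    using wardrop_imp_water_level[OF a y] by blast
  define T where "T = (\<Sum>j\<in>{1..n}. 1 / a j)"
  define z where "z = toll_shift_flow a x i d (L - K)"
  have z_cost: "a j * z j + b j + (t(i := t i + d)) j = L" if j: "j \<in> {1..n}" for j
  proof -
    have "a j \<noteq> 0" "a j * x j + b j + t j = K" using bspec[OF a j] bspec[OF cost j] by auto
    from toll_shift_flow_cost[of a j x b t K i d "L - K", OF this] show ?thesis
      unfolding z_def by simp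
  qed
  have z_le: "z j \<le> y j" if j: "j \<in> {1..n}" for j
  proof -
    have "z j = (L - b j - (t(i := t i + d)) j) / a j"
      using z_cost[OF j] bspec[OF a j] by (simp add: field_simps)
    with water_level_lower[OF L j] show ?thesis by simp
  qed
  have "a i * y i = a i * z i"
    using water_level_cost[OF L i bspec[OF a i] pos] z_cost[OF i] by linarith
  then have "y i = z i" using bspec[OF a i] by simp
  have "1 + (L - K) * T - d / a i = (\<Sum>j\<in>{1..n}. z j)"
    using sum_toll_shift_flow[OF i] sum unfolding z_def T_def by simp
  also have "\<dots> \<le> (\<Sum>j\<in>{1..n}. y j)" using z_le by (intro sum_mono) auto
  also have "\<dots> = 1" using y by (simp add: wardrop_def is_flow_def)
  finally have "(L - K) * T \<le> d / a i" by simp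
  moreover have "0 < a i" "0 < T"
    using a i n unfolding T_def by (auto intro!: sum_pos)
  ultimately have "L - K \<le> d / (a i * T)" by (simp add: field_simps)
  then have "(L - K) / a i \<le> d / (a i * T) / a i"
    using \<open>0 < a i\<close> by (intro divide_right_mono) auto
  then have "z i \<le> x i + d / (a i * T) / a i - d / a i"
    unfolding z_def toll_shift_flow_def by simp
  also have "\<dots> = x i - d / demand_slope n a i"
    unfolding divide_demand_slope[OF a n i] T_def by (simp add: diff_divide_distrib)
  finally show ?thesis using \<open>y i = z i\<close> by simp
qed

lemma eventually_eqflow_deviation:
  assumes a: "\<forall>j\<in>{1..n}. 0 < a j" and n: "2 \<le> n" and i: "i \<in> {1..n}"
    and cost: "\<forall>j\<in>{1..n}. a j * x j + b j + t j = K" and sum: "(\<Sum>j\<in>{1..n}. x j) = 1"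
    and pos: "\<forall>j\<in>{1..n}. 0 < x j"
  shows "\<forall>\<^sub>F d in at 0. eqflow n a b (t(i := t i + d)) i = x i - d / demand_slope n a i"
proof -
  define T where "T = (\<Sum>j\<in>{1..n}. 1 / a j)"
  define z where "z d = toll_shift_flow a x i d (d / (a i * T))" for d
  have "\<forall>\<^sub>F d in at 0. \<forall>j\<in>{1..n}. 0 < z d j"
  proof (intro eventually_ball_finite ballI)
    fix j assume j: "j \<in> {1..n}"
    define c where "c = 1 / (a i * T) / a j - (if j = i then 1 / a i else 0)"
    have "(\<lambda>d. z d j) = (\<lambda>d. x j + d * c)"
      by (auto simp: z_def toll_shift_flow_def c_def algebra_simps)
    moreover have "((\<lambda>d. x j + d * c) \<longlongrightarrow> x j) (at 0)"
      by (auto intro!: tendsto_eq_intros)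
    ultimately have "((\<lambda>d. z d j) \<longlongrightarrow> x j) (at 0)" by simp
    then show "\<forall>\<^sub>F d in at 0. 0 < z d j"
      using pos j by (auto intro: order_tendstoD(1))
  qed simp
  then show ?thesis
  proof (rule eventually_mono)
    fix d assume z_pos: "\<forall>j\<in>{1..n}. 0 < z d j"
    have "0 < a i" "0 < T"
      using a i n unfolding T_def by (auto intro!: sum_pos)
    then have "(\<Sum>j\<in>{1..n}. z d j) = 1"
      using sum_toll_shift_flow[OF i] sum unfolding z_def T_def by simp
    moreover have "a j * z d j + b j + (t(i := t i + d)) j = K + d / (a i * T)"
      if j: "j \<in> {1..n}" for j
    proof -
      have "a j \<noteq> 0" "a j * x j + b j + t j = K" using bspec[OF a j] bspec[OF cost j] by auto
      from toll_shift_flow_cost[of a j x b t K, OF this] show ?thesis unfolding z_def .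
    qed
    ultimately have "eqflow n a b (t(i := t i + d)) i = z d i"
      using eqflow_of_costs[OF a _ _ z_pos i] by blast
    also have "\<dots> = x i - d / demand_slope n a i"
      unfolding divide_demand_slope[OF a n i] z_def toll_shift_flow_def T_def
      by (simp add: diff_divide_distrib)
    finally show "eqflow n a b (t(i := t i + d)) i = x i - d / demand_slope n a i" .
  qed
qed

lemma capped_markup_best_response:
  fixes \<alpha> x \<tau> t' c :: real
  assumes \<alpha>: "0 < \<alpha>" and t': "0 \<le> t'" "t' \<le> c" and \<tau>: "\<tau> = min (\<alpha> * x) c"
  shows "t' * (x - (t' - \<tau>) / \<alpha>) \<le> \<tau> * x"
proof -
  have "t' * (\<alpha> * x - t' + \<tau>) \<le> \<tau> * (\<alpha> * x)"
  proof (cases "\<alpha> * x \<le> c")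
    case True
    then have "\<tau> * (\<alpha> * x) - t' * (\<alpha> * x - t' + \<tau>) = (\<tau> - t')\<^sup>2"
      using \<tau> by (simp add: power2_eq_square algebra_simps)
    then show ?thesis by (metis diff_ge_0_iff_ge zero_le_power2)
  next
    case False
    then have "\<tau> * (\<alpha> * x) - t' * (\<alpha> * x - t' + \<tau>) = (c - t') * (\<alpha> * x - t')"
      using \<tau> by (simp add: algebra_simps)
    moreover have "0 \<le> (c - t') * (\<alpha> * x - t')" using t' False by simp
    ultimately show ?thesis by linarith
  qed
  then have "t' * (\<alpha> * x - t' + \<tau>) / \<alpha> \<le> \<tau> * (\<alpha> * x) / \<alpha>"
    using \<alpha> by (intro divide_right_mono) auto
  with \<alpha> show ?thesis by (simp add: field_simps)
qed

lemma quadratic_local_max: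
  fixes \<alpha> g lo hi :: real
  assumes \<alpha>: "0 < \<alpha>" and lo: "lo \<le> 0" and hi: "0 \<le> hi"
    and max: "\<forall>\<^sub>F d in at 0. lo \<le> d \<longrightarrow> d \<le> hi \<longrightarrow> d * (g - d / \<alpha>) \<le> 0"
  shows "0 < g \<Longrightarrow> hi = 0" and "g < 0 \<Longrightarrow> lo = 0"
proof -
  obtain \<epsilon> where \<epsilon>: "0 < \<epsilon>"
    and near: "\<And>d. d \<noteq> 0 \<Longrightarrow> \<bar>d\<bar> < \<epsilon> \<Longrightarrow> lo \<le> d \<Longrightarrow> d \<le> hi \<Longrightarrow> d * (g - d / \<alpha>) \<le> 0"
    using max unfolding eventually_at dist_real_def by auto
  show "hi = 0" if g: "0 < g"
  proof (rule ccontr)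
    assume "hi \<noteq> 0"
    define d where "d = min \<epsilon> (min hi (\<alpha> * g)) / 2"
    have "0 < d" "d < \<epsilon>" "d \<le> hi" "d < \<alpha> * g"
      using \<epsilon> hi mult_pos_pos[OF \<alpha> g] \<open>hi \<noteq> 0\<close> unfolding d_def by (auto simp: min_def)
    then have "0 < d * (g - d / \<alpha>)" using \<alpha> by (simp add: field_simps)
    with near[of d] \<open>0 < d\<close> \<open>d < \<epsilon>\<close> \<open>d \<le> hi\<close> lo show False by simp
  qed
  show "lo = 0" if g: "g < 0"
  proof (rule ccontr)
    assume "lo \<noteq> 0"
    define d where "d = - min \<epsilon> (min (- lo) (- \<alpha> * g)) / 2"
    have "d < 0" "- d < \<epsilon>" "lo \<le> d" "\<alpha> * g < d"
      using \<epsilon> lo mult_pos_neg[OF \<alpha> g] \<open>lo \<noteq> 0\<close> unfolding d_def by (auto simp: min_def)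
    then have "0 < d * (g - d / \<alpha>)" using \<alpha> by (simp add: mult_neg_neg field_simps)
    with near[of d] \<open>d < 0\<close> \<open>- d < \<epsilon>\<close> \<open>lo \<le> d\<close> hi show False by simp
  qed
qed

lemma capped_SPNE_eqflow_pos:
  assumes a: "\<forall>j\<in>{1..n}. 0 < a j" and n: "1 \<le> n"
    and untolled: "\<forall>j\<in>{1..n}. 0 < eqflow n a b (\<lambda>_. 0) j"
    and t: "t \<in> capped_SPNE n a b c" and i: "i \<in> {1..n}"
  shows "0 < eqflow n a b t i"
proof (rule ccontr)
  assume unused: "\<not> 0 < eqflow n a b t i"
  have tc: "\<forall>j\<in>{1..n}. 0 \<le> t j \<and> t j \<le> c"
    and opt: "\<forall>t'\<in>{0..c}. profit n a b (t(i := t')) i \<le> profit n a b t i"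
    using t i by (auto simp: capped_SPNE_def)
  have ai: "0 < a i" using a i by blast
  obtain K where K: "water_level n a b t K (eqflow n a b t)"
    and sum: "(\<Sum>j\<in>{1..n}. eqflow n a b t j) = 1"
    by (rule eqflow_water_level[OF a n])
  obtain K\<^sub>0 where K\<^sub>0: "water_level n a b (\<lambda>_. 0) K\<^sub>0 (eqflow n a b (\<lambda>_. 0))"
    and sum\<^sub>0: "(\<Sum>j\<in>{1..n}. eqflow n a b (\<lambda>_. 0) j) = 1"
    by (rule eqflow_water_level[OF a n])
  have "K\<^sub>0 \<le> K"
    using water_level_comparison[OF a K\<^sub>0 sum\<^sub>0 K sum] tc by force
  moreover have "b i < K\<^sub>0"
    using water_level_cost[OF K\<^sub>0 i ai] untolled i ai by force
  moreover have "K \<le> b i + t i"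
    by (rule water_level_unused[OF K i ai unused])
  ultimately have "0 < K - b i" "K - b i \<le> c" using bspec[OF tc i] by auto
  define t' where "t' = min c ((K - b i) / 2)"
  have t': "0 < t'" "t' \<le> c" "t' < K - b i"
    using \<open>0 < K - b i\<close> \<open>K - b i \<le> c\<close> unfolding t'_def by auto
  define y where "y = eqflow n a b (t(i := t'))"
  obtain L where L: "water_level n a b (t(i := t')) L y" and sum\<^sub>y: "(\<Sum>j\<in>{1..n}. y j) = 1"
    unfolding y_def by (rule eqflow_water_level[OF a n])
  have "0 < y i"
  proof (rule ccontr)
    assume "\<not> 0 < y i"
    then have "L < K" using water_level_unused[OF L i ai] t' by simp
    obtain j where "j \<in> {1..n}" "0 < y j" "K - t j \<le> L - (t(i := t')) j"
      using water_level_comparison[OF a K sum L sum\<^sub>y] by blast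
    with \<open>\<not> 0 < y i\<close> \<open>L < K\<close> show False by (cases "j = i") auto
  qed
  then have "profit n a b t i < profit n a b (t(i := t')) i"
    using unused water_level_nonneg[OF K i] t' unfolding profit_def y_def by simp
  moreover have "profit n a b (t(i := t')) i \<le> profit n a b t i" using opt t' by simp
  ultimately show False by simp
qed

lemma capped_SPNE_toll:
  assumes a: "\<forall>j\<in>{1..n}. 0 < a j" and n: "2 \<le> n"
    and t: "t \<in> capped_SPNE n a b c" and pos: "\<forall>j\<in>{1..n}. 0 < eqflow n a b t j"
    and i: "i \<in> {1..n}"
  shows "t i = min (demand_slope n a i * eqflow n a b t i) c"
proof -
  define x where "x = eqflow n a b t"
  define \<alpha> where "\<alpha> = demand_slope n a i"
  define g where "g = x i - t i / \<alpha>"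
  have \<alpha>: "0 < \<alpha>" unfolding \<alpha>_def by (rule demand_slope_pos[OF a n i])
  have tc: "0 \<le> t i" "t i \<le> c"
    and opt: "\<forall>t'\<in>{0..c}. profit n a b (t(i := t')) i \<le> profit n a b t i"
    using t i by (auto simp: capped_SPNE_def)
  obtain K where K: "water_level n a b t K x" and sum: "(\<Sum>j\<in>{1..n}. x j) = 1"
    unfolding x_def using n by (metis eqflow_water_level[OF a] one_le_numeral order_trans)
  have x_pos: "\<forall>j\<in>{1..n}. 0 < x j" using pos unfolding x_def .
  have cost: "\<forall>j\<in>{1..n}. a j * x j + b j + t j = K"
    using water_level_cost[OF K] a x_pos by blast
  have "\<forall>\<^sub>F d in at 0. - t i \<le> d \<longrightarrow> d \<le> c - t i \<longrightarrow> d * (g - d / \<alpha>) \<le> 0"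
    using eventually_eqflow_deviation[OF a n i cost sum x_pos]
  proof (rule eventually_mono)
    fix d assume dev: "eqflow n a b (t(i := t i + d)) i = x i - d / demand_slope n a i"
    show "- t i \<le> d \<longrightarrow> d \<le> c - t i \<longrightarrow> d * (g - d / \<alpha>) \<le> 0"
    proof (intro impI)
      assume "- t i \<le> d" "d \<le> c - t i"
      then have "t i + d \<in> {0..c}" by simp
      from bspec[OF opt this] dev have "(t i + d) * (x i - d / \<alpha>) \<le> t i * x i"
        unfolding profit_def x_def \<alpha>_def by simp
      moreover have "(t i + d) * (x i - d / \<alpha>) = t i * x i + d * (g - d / \<alpha>)"
        unfolding g_def by (simp add: algebra_simps)
      ultimately show "d * (g - d / \<alpha>) \<le> 0" by simp
    qed
  qed
  from quadratic_local_max[OF \<alpha> _ _ this] tc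
  have g_pos: "0 < g \<Longrightarrow> t i = c" and g_neg: "g < 0 \<Longrightarrow> t i = 0" by auto
  have "0 \<le> g"
    using g_neg pos i unfolding g_def x_def by force
  then have "t i \<le> \<alpha> * x i" using \<alpha> unfolding g_def by (simp add: field_simps)
  moreover have "t i < \<alpha> * x i \<Longrightarrow> t i = c" using g_pos \<alpha> unfolding g_def by (simp add: field_simps)
  ultimately have "t i = min (\<alpha> * x i) c" using tc by fastforce
  then show ?thesis unfolding x_def \<alpha>_def .
qed

lemma capped_SPNE_of_markup:
  assumes a: "\<forall>j\<in>{1..n}. 0 < a j" and n: "2 \<le> n" and t0: "\<forall>j\<in>{1..n}. 0 \<le> t j"
    and cost: "\<forall>j\<in>{1..n}. a j * x j + b j + t j = K" and sum: "(\<Sum>j\<in>{1..n}. x j) = 1"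
    and pos: "\<forall>j\<in>{1..n}. 0 < x j"
    and markup: "\<forall>j\<in>{1..n}. t j = min (demand_slope n a j * x j) c"
  shows "t \<in> capped_SPNE n a b c"
  unfolding capped_SPNE_def
proof (intro CollectI conjI ballI)
  fix i assume i: "i \<in> {1..n}"
  show "0 \<le> t i" "t i \<le> c" using t0 markup i by auto
  fix t' assume t': "t' \<in> {0..c}"
  define y where "y = eqflow n a b (t(i := t'))"
  have n1: "1 \<le> n" using n by simp
  have x: "eqflow n a b t i = x i" by (rule eqflow_of_costs[OF a cost sum pos i])
  have "t' * y i \<le> t i * x i"
  proof (cases "0 < y i")
    case True
    have "t(i := t i + (t' - t i)) = t(i := t')" by simp
    then have "wardrop n a b (t(i := t i + (t' - t i))) y"
      unfolding y_def using wardrop_eqflow[OF a n1] by metis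
    from wardrop_deviation_le[OF a n i cost sum this True]
    have "t' * y i \<le> t' * (x i - (t' - t i) / demand_slope n a i)"
      using t' by (intro mult_left_mono) auto
    also have "\<dots> \<le> t i * x i"
      using capped_markup_best_response[OF demand_slope_pos[OF a n i]] t' markup i by simp
    finally show ?thesis .
  next
    case False
    then have "y i = 0" using wardrop_eqflow[OF a n1] i unfolding y_def wardrop_def is_flow_def
      by (meson antisym not_le)
    then show ?thesis using bspec[OF t0 i] bspec[OF pos i] by simp
  qed
  then show "profit n a b (t(i := t')) i \<le> profit n a b t i"
    unfolding profit_def y_def x by simp
qed

theorem mainTheorem5:
  fixes n :: nat and a b t x :: "nat \<Rightarrow> real" and c :: real
  assumes "n \<ge> 2"
    and "\<forall>i\<in>{1..n}. a i > 0" and "\<forall>i\<in>{1..n}. b i \<ge> 0"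
    and "\<forall>i\<in>{1..n}. eqflow n a b (\<lambda>_. 0) i > 0"
    and "c \<ge> 0"
    and "\<forall>i\<in>{1..n}. t i \<ge> 0"
    and "is_flow n x"
  shows "(t \<in> capped_SPNE n a b c \<and> (\<forall>i\<in>{1..n}. x i = eqflow n a b t i)) \<longleftrightarrow>
    (\<exists>K::real.
       (\<forall>i\<in>{1..n}. a i * x i + b i + t i = K) \<and>
       (\<Sum>i\<in>{1..n}. x i) = 1 \<and>
       (\<forall>i\<in>{1..n}. t i = min ((a i + 1 / (\<Sum>j\<in>{1..n} - {i}. 1 / a j)) * x i) c) \<and>
       (\<forall>i\<in>{1..n}. x i > 0))"
  (is "?spne \<longleftrightarrow> (\<exists>K. ?cost K \<and> ?sum \<and> ?markup \<and> ?pos)")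
proof -
  note n = assms(1) and a = assms(2) and untolled = assms(4) and t0 = assms(6)
  have n1: "1 \<le> n" using n by simp
  have sum: ?sum using assms(7) by (simp add: is_flow_def)
  have markup_iff: "?markup \<longleftrightarrow> (\<forall>i\<in>{1..n}. t i = min (demand_slope n a i * x i) c)"
    by (simp add: demand_slope_def)
  show ?thesis
  proof
    assume ?spne
    then have t: "t \<in> capped_SPNE n a b c" and x: "\<forall>i\<in>{1..n}. x i = eqflow n a b t i" by auto
    have pos: "\<forall>i\<in>{1..n}. 0 < eqflow n a b t i"
      using capped_SPNE_eqflow_pos[OF a n1 untolled t] by blast
    obtain K where K: "water_level n a b t K (eqflow n a b t)" by (rule eqflow_water_level[OF a n1])
    have "?cost K" using water_level_cost[OF K] a pos x by simp
    moreover have ?markup using capped_SPNE_toll[OF a n t pos] x markup_iff by simp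
    ultimately show "\<exists>K. ?cost K \<and> ?sum \<and> ?markup \<and> ?pos" using sum pos x by auto
  next
    assume "\<exists>K. ?cost K \<and> ?sum \<and> ?markup \<and> ?pos"
    then obtain K where cost: "?cost K" and markup: ?markup and pos: ?pos by blast
    have "\<forall>i\<in>{1..n}. x i = eqflow n a b t i" using eqflow_of_costs[OF a cost sum pos] by simp
    moreover have "t \<in> capped_SPNE n a b c"
      using capped_SPNE_of_markup[OF a n t0 cost sum pos] markup markup_iff by simp
    ultimately show ?spne by simp
  qed
qed

end
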